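(* Let $k\ge 2$ and let $G$ be a $k$-tree. Then every vertex of $G$ has mindegree at least $k-1$. Moreover, $G$ has at least $k+1$ vertices of mindegree exactly $k-1$, unless $G$ is isomorphic to the symmetric complete graph $\overleftrightarrow{K}_k$ or $G$ is a symmetric path of odd length (in which case $k=2$).
   Context: Digraphs have no loops and no parallel arcs, but may contain digons. $d_{min}(v)=\min(d^+(v),d^-(v))$ is the mindegree of $v$; $\Delta_{max}(G)=\max_v\max(d^+(v),d^-(v))$. A symmetric cycle / complete graph / path is obtained from the corresponding undirected graph by replacing each edge by a digon. $\mathcal B_1$ is the set of directed cycles (including digons), $\mathcal B_2$ the set of symmetric cycles of odd length, and for $j\ge 3$, $\mathcal B_j=\{\overleftrightarrow K_{j+1}\}$ (all up to isomorphism). A digraph $G$ is a direct composition of digraphs $G_1,G_2$ on vertices $v_1\in V(G_1)$, $v_2\in V(G_2)$ if it is obtained from the disjoint union of $G_1$ and $G_2$ by adding exactly one arc between $v_1$ and $v_2$ (either $v_1v_2$ or $v_2v_1$). $G$ is a cyclic composition of $G_1,\dots,G_\ell$ ($\ell\ge 2$) on vertices $v_i\in V(G_i)$ if it is obtained from their disjoint union by adding the arcs $v_iv_{i+1}$ for $i=1,\dots,\ell-1$ and $v_\ell v_1$. A digraph $G$ is a $k$-tree if $\Delta_{max}(G)\le k$ and it can be built by the rules: every member of $\mathcal B_{k-1}$ is a $k$-tree; a direct or cyclic composition of $k$-trees is a $k$-tree. *)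

theory Defs
  imports Main
begin

text \<open>A digraph is a pair (V, A) of a vertex set and an arc set. Using a set of
  ordered pairs excludes parallel arcs; loops are excluded by dg_wf; digons
  (both (u,v) and (v,u)) are allowed.\<close>

type_synonym 'a digraph = "'a set \<times> ('a \<times> 'a) set"

definition verts :: "'a digraph \<Rightarrow> 'a set" where "verts G = fst G"
definition arcs :: "'a digraph \<Rightarrow> ('a \<times> 'a) set" where "arcs G = snd G"

definition dg_wf :: "'a digraph \<Rightarrow> bool" where
  "dg_wf G \<longleftrightarrow> finite (verts G) \<and> arcs G \<subseteq> verts G \<times> verts G
     \<and> (\<forall>v. (v, v) \<notin> arcs G)"

definition outdeg :: "'a digraph \<Rightarrow> 'a \<Rightarrow> nat" where
  "outdeg G v = card {w. (v, w) \<in> arcs G}"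

definition indeg :: "'a digraph \<Rightarrow> 'a \<Rightarrow> nat" where
  "indeg G v = card {u. (u, v) \<in> arcs G}"

definition mindeg :: "'a digraph \<Rightarrow> 'a \<Rightarrow> nat" where
  "mindeg G v = min (outdeg G v) (indeg G v)"

definition Delta_max :: "'a digraph \<Rightarrow> nat" where
  "Delta_max G = Max (insert 0 ((\<lambda>v. max (outdeg G v) (indeg G v)) ` verts G))"

definition dg_iso :: "'a digraph \<Rightarrow> 'b digraph \<Rightarrow> bool" where
  "dg_iso G H \<longleftrightarrow> (\<exists>f. bij_betw f (verts G) (verts H) \<and>
     (\<forall>u\<in>verts G. \<forall>v\<in>verts G. (u, v) \<in> arcs G \<longleftrightarrow> (f u, f v) \<in> arcs H))"

definition dicycle :: "nat \<Rightarrow> nat digraph" where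
  "dicycle n = ({0..<n}, {(i, (i + 1) mod n) | i. i < n})"

definition symcycle :: "nat \<Rightarrow> nat digraph" where
  "symcycle n = ({0..<n}, {(i, (i + 1) mod n) | i. i < n} \<union> {((i + 1) mod n, i) | i. i < n})"

definition symK :: "nat \<Rightarrow> nat digraph" where
  "symK n = ({0..<n}, {(i, j). i < n \<and> j < n \<and> i \<noteq> j})"

text \<open>Symmetric path of length n (n arcs-pairs, n+1 vertices).\<close>
definition sympath :: "nat \<Rightarrow> nat digraph" where
  "sympath n = ({0..n}, {(i, i + 1) | i. i < n} \<union> {(i + 1, i) | i. i < n})"

definition in_B :: "nat \<Rightarrow> 'a digraph \<Rightarrow> bool" where
  "in_B j G \<longleftrightarrow>
     (j = 1 \<and> (\<exists>n\<ge>2. dg_iso G (dicycle n))) \<or>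
     (j = 2 \<and> (\<exists>n. odd n \<and> n \<ge> 3 \<and> dg_iso G (symcycle n))) \<or>
     (j \<ge> 3 \<and> dg_iso G (symK (j + 1)))"

text \<open>k-trees. Compositions are of vertex-disjoint digraphs; a cyclic composition
  of l >= 2 parts is given by indexed families over {0..<l}.\<close>
inductive ktree :: "nat \<Rightarrow> 'a digraph \<Rightarrow> bool" for k :: nat where
  base: "\<lbrakk> dg_wf G; in_B (k - 1) G; Delta_max G \<le> k \<rbrakk> \<Longrightarrow> ktree k G"
| direct: "\<lbrakk> ktree k (V1, A1); ktree k (V2, A2); V1 \<inter> V2 = {};
             v1 \<in> V1; v2 \<in> V2; e = (v1, v2) \<or> e = (v2, v1);
             Delta_max (V1 \<union> V2, A1 \<union> A2 \<union> {e}) \<le> k \<rbrakk>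
           \<Longrightarrow> ktree k (V1 \<union> V2, A1 \<union> A2 \<union> {e})"
| cyclic: "\<lbrakk> (l::nat) \<ge> 2; \<forall>i<l. ktree k (Vs i, As i); \<forall>i<l. vs i \<in> Vs i;
             \<forall>i<l. \<forall>j<l. i \<noteq> j \<longrightarrow> Vs i \<inter> Vs j = {};
             G = ((\<Union>i<l. Vs i),
                  (\<Union>i<l. As i) \<union> {(vs i, vs ((i + 1) mod l)) | i. i < l});
             Delta_max G \<le> k \<rbrakk>
           \<Longrightarrow> ktree k G"

end

(* Induction along the construction of a k-tree.  The invariant: every mindegree is at least
   k - 1, and at least k + 1 vertices are low (of mindegree exactly k - 1) unless G is
   exceptional, i.e. the symmetric K_k or, for k = 2, an odd symmetric path.  Members of
   B_(k-1) are (k-1)-regular with at least k + 1 vertices unless they are the symmetric K_k.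
   A composition only adds arcs at its attachment vertices, so every other low vertex of a
   part stays low.  In a direct composition each side keeps at least k low vertices: a
   non-exceptional side loses at most its attachment vertex, and an exceptional side loses
   none, since it is symmetric and the new arc raises only one of the two equal degrees of
   its attachment vertex; this gives 2k >= k + 1.  In a cyclic composition of l parts each
   attachment vertex gains on both sides, so each part keeps at least k - 1 low vertices and
   l(k - 1) >= k + 1 unless k = l = 2.  Then either some part keeps 2, or both parts are odd
   symmetric paths; Delta_max <= 2 forces their attachment vertices to be end vertices, and
   the digon joins them into a longer odd symmetric path. *)

theory Submission
  imports Defs
begin

section \<open>Degrees and isomorphisms\<close>

lemma verts_pair [simp]: "verts (V, A) = V"
  by (simp add: verts_def)

lemma arcs_pair [simp]: "arcs (V, A) = A"
  by (simp add: arcs_def)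

lemma digraph_eqI: "verts G = verts H \<Longrightarrow> arcs G = arcs H \<Longrightarrow> G = H"
  by (simp add: verts_def arcs_def prod_eq_iff)

definition dg_iso_map :: "('a \<Rightarrow> 'b) \<Rightarrow> 'a digraph \<Rightarrow> 'b digraph \<Rightarrow> bool" where
  "dg_iso_map f G H \<longleftrightarrow> bij_betw f (verts G) (verts H) \<and>
     (\<forall>u\<in>verts G. \<forall>v\<in>verts G. (u, v) \<in> arcs G \<longleftrightarrow> (f u, f v) \<in> arcs H)"

lemma dg_iso_iff_map: "dg_iso G H \<longleftrightarrow> (\<exists>f. dg_iso_map f G H)"
  by (simp add: dg_iso_def dg_iso_map_def)

definition dg_converse :: "'a digraph \<Rightarrow> 'a digraph" where
  "dg_converse G = (verts G, (arcs G)\<inverse>)"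

lemma indeg_eq_outdeg_converse: "indeg G v = outdeg (dg_converse G) v"
  by (simp add: indeg_def outdeg_def dg_converse_def)

lemma dg_wf_converse: "dg_wf G \<Longrightarrow> dg_wf (dg_converse G)"
  by (auto simp: dg_wf_def dg_converse_def)

lemma dg_iso_map_converse: "dg_iso_map f G H \<Longrightarrow> dg_iso_map f (dg_converse G) (dg_converse H)"
  by (simp add: dg_iso_map_def dg_converse_def)

lemma outdeg_eq_indeg_if_sym: "sym (arcs G) \<Longrightarrow> outdeg G v = indeg G v"
proof -
  assume "sym (arcs G)"
  then have "{w. (v, w) \<in> arcs G} = {w. (w, v) \<in> arcs G}"
    by (auto dest: symD)
  then show ?thesis
    by (simp add: outdeg_def indeg_def)
qed

lemma mindeg_mono:
  "outdeg H v \<le> outdeg G w \<Longrightarrow> indeg H v \<le> indeg G w \<Longrightarrow> mindeg H v \<le> mindeg G w"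
  by (simp add: mindeg_def min_le_iff_disj)

lemma degrees_le_Delta_max:
  assumes "dg_wf G" "v \<in> verts G"
  shows "outdeg G v \<le> Delta_max G" "indeg G v \<le> Delta_max G"
proof -
  have "max (outdeg G v) (indeg G v) \<le> Delta_max G"
    unfolding Delta_max_def using assms by (intro Max_ge) (auto simp: dg_wf_def)
  then show "outdeg G v \<le> Delta_max G" "indeg G v \<le> Delta_max G"
    by simp_all
qed

lemma outdeg_dg_iso_map:
  assumes f: "dg_iso_map f G H" and "dg_wf G" "dg_wf H" and v: "v \<in> verts G"
  shows "outdeg H (f v) = outdeg G v"
proof -
  have bij: "bij_betw f (verts G) (verts H)" and arcs_iff:
    "\<And>u w. u \<in> verts G \<Longrightarrow> w \<in> verts G \<Longrightarrow> (u, w) \<in> arcs G \<longleftrightarrow> (f u, f w) \<in> arcs H"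
    using f by (auto simp: dg_iso_map_def)
  have out_G: "{w. (v, w) \<in> arcs G} \<subseteq> verts G" and out_H: "{w. (f v, w) \<in> arcs H} \<subseteq> verts H"
    using assms(2,3) by (auto simp: dg_wf_def)
  have "{w. (f v, w) \<in> arcs H} = f ` {w. (v, w) \<in> arcs G}"
  proof (intro equalityI subsetI)
    fix w' assume w': "w' \<in> {w. (f v, w) \<in> arcs H}"
    then obtain w where "w \<in> verts G" "w' = f w"
      using out_H bij by (auto simp: bij_betw_def)
    then show "w' \<in> f ` {w. (v, w) \<in> arcs G}"
      using w' arcs_iff v by auto
  qed (use out_G arcs_iff v in auto)
  moreover have "inj_on f {w. (v, w) \<in> arcs G}"
    using bij out_G by (auto simp: bij_betw_def intro: inj_on_subset)
  ultimately show ?thesis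
    by (simp add: outdeg_def card_image)
qed

lemma indeg_dg_iso_map:
  assumes "dg_iso_map f G H" "dg_wf G" "dg_wf H" "v \<in> verts G"
  shows "indeg H (f v) = indeg G v"
  using outdeg_dg_iso_map[OF dg_iso_map_converse dg_wf_converse dg_wf_converse] assms
  by (simp add: indeg_eq_outdeg_converse dg_converse_def)

lemma mindeg_dg_iso_map:
  assumes "dg_iso_map f G H" "dg_wf G" "dg_wf H" "v \<in> verts G"
  shows "mindeg H (f v) = mindeg G v"
  using outdeg_dg_iso_map[OF assms] indeg_dg_iso_map[OF assms] by (simp add: mindeg_def)

lemma sym_arcs_dg_iso_map:
  assumes "dg_iso_map f G H" "dg_wf G" "sym (arcs H)"
  shows "sym (arcs G)"
  using assms unfolding dg_iso_map_def dg_wf_def sym_def by blast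

lemma card_dg_iso_map_Collect:
  assumes "dg_iso_map f G H"
  shows "card {v\<in>verts G. P (f v)} = card {w\<in>verts H. P w}"
proof -
  have bij: "bij_betw f (verts G) (verts H)"
    using assms by (simp add: dg_iso_map_def)
  then have "bij_betw f {v\<in>verts G. P (f v)} {w\<in>verts H. P w}"
    by (rule bij_betw_subset) (use bij in \<open>force simp: bij_betw_def\<close>)+
  then show ?thesis
    by (rule bij_betw_same_card)
qed

definition dg_regular :: "nat \<Rightarrow> 'a digraph \<Rightarrow> bool" where
  "dg_regular d G \<longleftrightarrow> (\<forall>v\<in>verts G. outdeg G v = d \<and> indeg G v = d)"

lemma dg_regular_dg_iso_map:
  assumes "dg_iso_map f G H" "dg_wf G" "dg_wf H" "dg_regular d H"
  shows "dg_regular d G"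
  unfolding dg_regular_def
proof
  fix v assume v: "v \<in> verts G"
  then have "f v \<in> verts H"
    using assms(1) by (auto simp: dg_iso_map_def bij_betw_def)
  with v show "outdeg G v = d \<and> indeg G v = d"
    using assms(4) outdeg_dg_iso_map[OF assms(1-3)] indeg_dg_iso_map[OF assms(1-3)]
    by (auto simp: dg_regular_def)
qed

lemma card_verts_dg_iso_map: "dg_iso_map f G H \<Longrightarrow> card (verts G) = card (verts H)"
  unfolding dg_iso_map_def by (blast intro: bij_betw_same_card)

lemma dg_iso_map_comp:
  assumes "dg_iso_map f G H" "dg_iso_map g H K"
  shows "dg_iso_map (g \<circ> f) G K"
proof -
  have "f u \<in> verts H" if "u \<in> verts G" for u
    using assms(1) that by (auto simp: dg_iso_map_def bij_betw_def)
  then show ?thesis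
    using assms unfolding dg_iso_map_def by (auto intro: bij_betw_trans)
qed

section \<open>The reference digraphs\<close>

lemma symK_verts: "verts (symK n) = {0..<n}"
  by (simp add: symK_def)

lemma symK_arcs: "arcs (symK n) = {(i, j). i < n \<and> j < n \<and> i \<noteq> j}"
  by (simp add: symK_def)

lemma dg_wf_symK: "dg_wf (symK n)"
  by (auto simp: dg_wf_def symK_verts symK_arcs)

lemma sym_arcs_symK: "sym (arcs (symK n))"
  by (auto simp: symK_arcs intro: symI)

lemma dg_regular_symK: "dg_regular (n - 1) (symK n)"
proof -
  have "{j. (i, j) \<in> arcs (symK n)} = {0..<n} - {i}" "{j. (j, i) \<in> arcs (symK n)} = {0..<n} - {i}"
    if "i < n" for i
    using that by (auto simp: symK_arcs)
  then show ?thesis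
    by (simp add: dg_regular_def outdeg_def indeg_def symK_verts)
qed

lemma sympath_verts: "verts (sympath n) = {0..n}"
  by (simp add: sympath_def)

lemma sympath_arcs: "arcs (sympath n) = {(i, j). i \<le> n \<and> j \<le> n \<and> (j = Suc i \<or> i = Suc j)}"
  by (auto simp: sympath_def)

lemma dg_wf_sympath: "dg_wf (sympath n)"
  by (auto simp: dg_wf_def sympath_verts sympath_arcs)

lemma sym_arcs_sympath: "sym (arcs (sympath n))"
  by (auto simp: sympath_arcs intro: symI)

lemma outdeg_sympath_inner: "0 < i \<Longrightarrow> i < n \<Longrightarrow> outdeg (sympath n) i = 2"
proof -
  assume "0 < i" "i < n"
  then have "{j. (i, j) \<in> arcs (sympath n)} = {i - 1, Suc i}"
    by (auto simp: sympath_arcs)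
  with \<open>0 < i\<close> show ?thesis
    by (simp add: outdeg_def)
qed

lemma mindeg_sympath_ends:
  assumes "0 < n"
  shows "mindeg (sympath n) 0 = 1" "mindeg (sympath n) n = 1"
proof -
  have "{j. (0, j) \<in> arcs (sympath n)} = {1}" "{j. (n, j) \<in> arcs (sympath n)} = {n - 1}"
    using assms by (auto simp: sympath_arcs)
  then show "mindeg (sympath n) 0 = 1" "mindeg (sympath n) n = 1"
    using outdeg_eq_indeg_if_sym[OF sym_arcs_sympath, symmetric]
    by (simp_all add: mindeg_def outdeg_def)
qed

lemma Suc_mod_preimage:
  "(i::nat) < n \<Longrightarrow> {j. j < n \<and> Suc j mod n = i} = {if i = 0 then n - 1 else i - 1}"
  by (auto simp: mod_Suc)

lemma Suc_mod_neq: "2 \<le> n \<Longrightarrow> (i::nat) < n \<Longrightarrow> Suc i mod n \<noteq> i"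
  by (cases "Suc i = n") auto

lemma dicycle_verts: "verts (dicycle n) = {0..<n}"
  by (simp add: dicycle_def)

lemma dicycle_arcs: "arcs (dicycle n) = {(i, Suc i mod n) | i. i < n}"
  by (simp add: dicycle_def)

lemma dg_wf_dicycle: "2 \<le> n \<Longrightarrow> dg_wf (dicycle n)"
  by (auto simp: dg_wf_def dicycle_verts dicycle_arcs dest: Suc_mod_neq)

lemma dg_regular_dicycle: "dg_regular 1 (dicycle n)"
proof -
  have "{j. (i, j) \<in> arcs (dicycle n)} = {Suc i mod n}" if "i < n" for i
    using that by (auto simp: dicycle_arcs)
  moreover have "{j. (j, i) \<in> arcs (dicycle n)} = {j. j < n \<and> Suc j mod n = i}" for i
    by (auto simp: dicycle_arcs)
  ultimately show ?thesis
    by (simp add: dg_regular_def outdeg_def indeg_def dicycle_verts Suc_mod_preimage)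
qed

lemma symcycle_verts: "verts (symcycle n) = {0..<n}"
  by (simp add: symcycle_def)

lemma symcycle_arcs:
  "arcs (symcycle n) = {(i, Suc i mod n) | i. i < n} \<union> {(Suc i mod n, i) | i. i < n}"
  by (simp add: symcycle_def)

lemma dg_wf_symcycle: "2 \<le> n \<Longrightarrow> dg_wf (symcycle n)"
  by (auto simp: dg_wf_def symcycle_verts symcycle_arcs dest: Suc_mod_neq)

lemma Suc_Suc_mod_neq: "3 \<le> n \<Longrightarrow> (i::nat) < n \<Longrightarrow> Suc (Suc i) mod n \<noteq> i"
  by (auto simp: mod_Suc)

lemma dg_regular_symcycle: "3 \<le> n \<Longrightarrow> dg_regular 2 (symcycle n)"
proof -
  assume "3 \<le> n"
  have "{j. (i, j) \<in> arcs (symcycle n)} = insert (Suc i mod n) {j. j < n \<and> Suc j mod n = i}"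
    "{j. (j, i) \<in> arcs (symcycle n)} = insert (Suc i mod n) {j. j < n \<and> Suc j mod n = i}"
    if "i < n" for i
    using that by (auto simp: symcycle_arcs)
  moreover have "Suc i mod n \<notin> {j. j < n \<and> Suc j mod n = i}" if "i < n" for i
    using Suc_Suc_mod_neq[OF \<open>3 \<le> n\<close> that] by (simp add: mod_Suc_eq)
  ultimately show ?thesis
    by (simp add: dg_regular_def outdeg_def indeg_def symcycle_verts Suc_mod_preimage)
qed

lemma symcycle_3: "symcycle 3 = symK 3"
proof (rule digraph_eqI)
  have "j = Suc i mod 3 \<or> i = Suc j mod 3" if "(i::nat) < 3" "j < 3" "i \<noteq> j" for i j
  proof -
    have "i \<in> {0, 1, 2}" "j \<in> {0, 1, 2}"
      using that by auto
    then show ?thesis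
      using that by auto
  qed
  then have "arcs (symK 3) \<subseteq> arcs (symcycle 3)"
    by (auto simp: symK_arcs symcycle_arcs)
  moreover have "arcs (symcycle 3) \<subseteq> arcs (symK 3)"
    using dg_wf_symcycle[of 3] by (auto simp: symK_arcs symcycle_verts dg_wf_def)
  ultimately show "arcs (symcycle 3) = arcs (symK 3)"
    by (rule equalityI[rotated])
qed (simp add: symcycle_verts symK_verts)

lemma dicycle_2: "dicycle 2 = symK 2"
proof (rule digraph_eqI)
  have "j = Suc i mod 2" if "(i::nat) < 2" "j < 2" "i \<noteq> j" for i j
    using that by (auto simp: less_2_cases_iff)
  then have "arcs (symK 2) \<subseteq> arcs (dicycle 2)"
    by (auto simp: symK_arcs dicycle_arcs)
  moreover have "arcs (dicycle 2) \<subseteq> arcs (symK 2)"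
    using dg_wf_dicycle[of 2] by (auto simp: symK_arcs dicycle_verts dg_wf_def)
  ultimately show "arcs (dicycle 2) = arcs (symK 2)"
    by (rule equalityI[rotated])
qed (simp add: dicycle_verts symK_verts)

lemma symK_2: "symK 2 = sympath 1"
  by (rule digraph_eqI) (auto simp: symK_verts symK_arcs sympath_verts sympath_arcs)

section \<open>Joining symmetric paths\<close>

lemma dg_iso_map_sympath_reflect: "dg_iso_map (\<lambda>i. n - i) (sympath n) (sympath n)"
proof -
  have "bij_betw (\<lambda>i. n - i) {0..n} {0..n}"
    by (rule bij_betw_byWitness[where f' = "\<lambda>i. n - i"]) auto
  then show ?thesis
    by (auto simp: dg_iso_map_def sympath_verts sympath_arcs)
qed

lemma dg_iso_map_sympath_endpoint:
  assumes f: "dg_iso_map f G (sympath n)" and "dg_wf G" "v \<in> verts G" "outdeg G v \<le> 1"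
  shows "f v = 0 \<or> f v = n"
proof (rule ccontr)
  assume "\<not> (f v = 0 \<or> f v = n)"
  moreover have "f v \<le> n"
    using f \<open>v \<in> verts G\<close> by (auto simp: dg_iso_map_def bij_betw_def sympath_verts)
  ultimately have "outdeg (sympath n) (f v) = 2"
    by (simp add: outdeg_sympath_inner)
  then show False
    using outdeg_dg_iso_map[OF f assms(2) dg_wf_sympath assms(3)] assms(4) by simp
qed

lemma dg_iso_map_sympath_to_end:
  assumes "dg_iso_map f G (sympath n)" "dg_wf G" "v \<in> verts G" "outdeg G v \<le> 1"
  obtains g where "dg_iso_map g G (sympath n)" "g v = n"
  using dg_iso_map_sympath_endpoint[OF assms] assms(1)
    dg_iso_map_comp[OF assms(1) dg_iso_map_sympath_reflect]
  by fastforce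

lemma dg_iso_map_sympath_to_start:
  assumes "dg_iso_map f G (sympath n)" "dg_wf G" "v \<in> verts G" "outdeg G v \<le> 1"
  obtains g where "dg_iso_map g G (sympath n)" "g v = 0"
  using dg_iso_map_sympath_endpoint[OF assms] assms(1)
    dg_iso_map_comp[OF assms(1) dg_iso_map_sympath_reflect]
  by fastforce

lemma bij_betw_join_atLeastAtMost:
  fixes f0 f1 :: "'a \<Rightarrow> nat"
  assumes "bij_betw f0 V0 {0..n0}" "bij_betw f1 V1 {0..n1}" "V0 \<inter> V1 = {}"
  shows "bij_betw (\<lambda>x. if x \<in> V0 then f0 x else n0 + 1 + f1 x) (V0 \<union> V1) {0..n0 + n1 + 1}"
proof -
  have "bij_betw ((+) (n0 + 1)) {0..n1} {0 + (n0 + 1)..n1 + (n0 + 1)}"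
    by (simp only: bij_betw_add image_add_atLeastAtMost)
  from bij_betw_disjoint_Un[OF assms(1) bij_betw_trans[OF assms(2) this] assms(3)]
  have "bij_betw (\<lambda>x. if x \<in> V0 then f0 x else n0 + 1 + f1 x) (V0 \<union> V1)
      ({0..n0} \<union> {0 + (n0 + 1)..n1 + (n0 + 1)})"
    unfolding comp_def by simp
  moreover have "{0..n0} \<union> {0 + (n0 + 1)..n1 + (n0 + 1)} = {0..n0 + n1 + 1}"
    by auto
  ultimately show ?thesis
    by simp
qed

lemma dg_iso_sympath_join:
  assumes f0: "dg_iso_map f0 (V0, A0) (sympath n0)" and f1: "dg_iso_map f1 (V1, A1) (sympath n1)"
    and "dg_wf (V0, A0)" "dg_wf (V1, A1)" "V0 \<inter> V1 = {}"
    and a: "a \<in> V0" "f0 a = n0" and b: "b \<in> V1" "f1 b = 0"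
  shows "dg_iso (V0 \<union> V1, A0 \<union> A1 \<union> {(a, b), (b, a)}) (sympath (n0 + n1 + 1))"
proof -
  define g where "g = (\<lambda>x. if x \<in> V0 then f0 x else n0 + 1 + f1 x)"
  have bij0: "bij_betw f0 V0 {0..n0}" and bij1: "bij_betw f1 V1 {0..n1}"
    using f0 f1 by (simp_all add: dg_iso_map_def sympath_verts)
  have "bij_betw g (V0 \<union> V1) {0..n0 + n1 + 1}"
    unfolding g_def by (rule bij_betw_join_atLeastAtMost[OF bij0 bij1 \<open>V0 \<inter> V1 = {}\<close>])
  moreover have "(u, v) \<in> A0 \<union> A1 \<union> {(a, b), (b, a)} \<longleftrightarrow>
      (g u, g v) \<in> arcs (sympath (n0 + n1 + 1))" if uv: "u \<in> V0 \<union> V1" "v \<in> V0 \<union> V1" for u v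
  proof -
    have le0: "f0 x \<le> n0" if "x \<in> V0" for x
      using bij0 that by (auto simp: bij_betw_def)
    have le1: "f1 x \<le> n1" if "x \<in> V1" for x
      using bij1 that by (auto simp: bij_betw_def)
    have inj0: "inj_on f0 V0" and inj1: "inj_on f1 V1"
      using bij0 bij1 by (simp_all add: bij_betw_def)
    have arcs0: "(x, y) \<in> A0 \<longleftrightarrow> (f0 x, f0 y) \<in> arcs (sympath n0)" if "x \<in> V0" "y \<in> V0" for x y
      using f0 that by (simp add: dg_iso_map_def)
    have arcs1: "(x, y) \<in> A1 \<longleftrightarrow> (f1 x, f1 y) \<in> arcs (sympath n1)" if "x \<in> V1" "y \<in> V1" for x y
      using f1 that by (simp add: dg_iso_map_def)
    have A0: "A0 \<subseteq> V0 \<times> V0" and A1: "A1 \<subseteq> V1 \<times> V1"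
      using assms(3,4) by (simp_all add: dg_wf_def)
    consider "u \<in> V0" "v \<in> V0" | "u \<in> V0" "v \<in> V1" | "u \<in> V1" "v \<in> V0" | "u \<in> V1" "v \<in> V1"
      using uv by blast
    then show ?thesis
    proof cases
      case 1
      then have "(u, v) \<in> A0 \<union> A1 \<union> {(a, b), (b, a)} \<longleftrightarrow> (f0 u, f0 v) \<in> arcs (sympath n0)"
        using arcs0 A1 b assms(5) by blast
      then show ?thesis
        using 1 le0[of u] le0[of v] by (auto simp: g_def sympath_arcs)
    next
      case 2
      then have "(u, v) \<in> A0 \<union> A1 \<union> {(a, b), (b, a)} \<longleftrightarrow> u = a \<and> v = b"
        using A0 A1 a b assms(5) by blast
      also have "\<dots> \<longleftrightarrow> f0 u = n0 \<and> f1 v = 0"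
        using 2 a b inj0 inj1 by (auto simp: inj_on_def)
      finally show ?thesis
        using 2 le0[of u] assms(5) by (auto simp: g_def sympath_arcs)
    next
      case 3
      then have "(u, v) \<in> A0 \<union> A1 \<union> {(a, b), (b, a)} \<longleftrightarrow> u = b \<and> v = a"
        using A0 A1 a b assms(5) by blast
      also have "\<dots> \<longleftrightarrow> f0 v = n0 \<and> f1 u = 0"
        using 3 a b inj0 inj1 by (auto simp: inj_on_def)
      finally show ?thesis
        using 3 le0[of v] assms(5) by (auto simp: g_def sympath_arcs)
    next
      case 4
      then have "(u, v) \<in> A0 \<union> A1 \<union> {(a, b), (b, a)} \<longleftrightarrow> (f1 u, f1 v) \<in> arcs (sympath n1)"
        using arcs1 A0 a assms(5) by blast
      then show ?thesis
        using 4 le1[of u] le1[of v] assms(5) by (auto simp: g_def sympath_arcs)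
    qed
  qed
  ultimately show ?thesis
    unfolding dg_iso_iff_map dg_iso_map_def by (auto simp: sympath_verts)
qed

section \<open>Direct and cyclic compositions\<close>

lemma dg_wf_direct_comp:
  assumes "dg_wf (V1, A1)" "dg_wf (V2, A2)" "V1 \<inter> V2 = {}" "e \<in> V1 \<times> V2 \<union> V2 \<times> V1"
  shows "dg_wf (V1 \<union> V2, A1 \<union> A2 \<union> {e})"
  using assms by (auto simp: dg_wf_def)

lemma direct_comp_commute: "(V1 \<union> V2, A1 \<union> A2 \<union> {e}) = (V2 \<union> V1, A2 \<union> A1 \<union> {e})"
  by (simp add: Un_commute)

lemma outdeg_direct_comp:
  assumes "dg_wf (V1, A1)" "dg_wf (V2, A2)" "V1 \<inter> V2 = {}" "e \<in> V1 \<times> V2 \<union> V2 \<times> V1" "v \<in> V1"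
  shows "outdeg (V1 \<union> V2, A1 \<union> A2 \<union> {e}) v = outdeg (V1, A1) v + (if fst e = v then 1 else 0)"
proof -
  have out: "{w. (v, w) \<in> A1 \<union> A2 \<union> {e}} =
      (if fst e = v then insert (snd e) {w. (v, w) \<in> A1} else {w. (v, w) \<in> A1})"
    using assms(2,3,5) by (cases e) (auto simp: dg_wf_def)
  have "finite {w. (v, w) \<in> A1}"
    using assms(1) by (auto simp: dg_wf_def intro: finite_subset)
  moreover have "fst e = v \<Longrightarrow> snd e \<notin> {w. (v, w) \<in> A1}"
    using assms(1,3-5) by (auto simp: dg_wf_def)
  ultimately show ?thesis
    unfolding outdeg_def arcs_pair out by simp
qed

lemma indeg_direct_comp:
  assumes "dg_wf (V1, A1)" "dg_wf (V2, A2)" "V1 \<inter> V2 = {}" "e \<in> V1 \<times> V2 \<union> V2 \<times> V1" "v \<in> V1"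
  shows "indeg (V1 \<union> V2, A1 \<union> A2 \<union> {e}) v = indeg (V1, A1) v + (if snd e = v then 1 else 0)"
proof -
  have "dg_converse (V1 \<union> V2, A1 \<union> A2 \<union> {e}) = (V1 \<union> V2, A1\<inverse> \<union> A2\<inverse> \<union> {prod.swap e})"
    by (cases e) (auto simp: dg_converse_def)
  moreover have "dg_wf (V1, A1\<inverse>)" "dg_wf (V2, A2\<inverse>)"
    using dg_wf_converse[OF assms(1)] dg_wf_converse[OF assms(2)] by (simp_all add: dg_converse_def)
  moreover have "prod.swap e \<in> V1 \<times> V2 \<union> V2 \<times> V1"
    using assms(4) by auto
  ultimately show ?thesis
    using outdeg_direct_comp[of V1 "A1\<inverse>" V2 "A2\<inverse>" "prod.swap e"] assms(3,5)
    by (simp add: indeg_eq_outdeg_converse dg_converse_def)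
qed

lemma dg_wf_cyclic_comp:
  fixes l :: nat
  assumes "2 \<le> l" "\<forall>i<l. dg_wf (Vs i, As i)" "\<forall>i<l. vs i \<in> Vs i"
    "\<forall>i<l. \<forall>j<l. i \<noteq> j \<longrightarrow> Vs i \<inter> Vs j = {}"
  shows "dg_wf ((\<Union>i<l. Vs i), (\<Union>i<l. As i) \<union> {(vs i, vs ((i + 1) mod l)) | i. i < l})"
proof -
  have next_lt: "(i + 1) mod l < l" for i
    using assms(1) by simp
  have next_ne: "vs i \<noteq> vs ((i + 1) mod l)" if "i < l" for i
  proof -
    have "(i + 1) mod l \<noteq> i"
      using Suc_mod_neq[OF assms(1) that] by simp
    then have "Vs i \<inter> Vs ((i + 1) mod l) = {}"
      using assms(4) that next_lt by blast
    moreover have "vs i \<in> Vs i" "vs ((i + 1) mod l) \<in> Vs ((i + 1) mod l)"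
      using assms(3) that next_lt by blast+
    ultimately show ?thesis
      by auto
  qed
  have "finite (\<Union>i<l. Vs i)"
    using assms(2) by (simp add: dg_wf_def)
  moreover have "(\<Union>i<l. As i) \<subseteq> (\<Union>i<l. Vs i) \<times> (\<Union>i<l. Vs i)"
    using assms(2) by (force simp: dg_wf_def)
  moreover have "{(vs i, vs ((i + 1) mod l)) | i. i < l} \<subseteq> (\<Union>i<l. Vs i) \<times> (\<Union>i<l. Vs i)"
    using assms(3) next_lt by blast
  moreover have "(v, v) \<notin> (\<Union>i<l. As i) \<union> {(vs i, vs ((i + 1) mod l)) | i. i < l}" for v
    using assms(2) next_ne by (auto simp: dg_wf_def) (metis next_ne)
  ultimately show ?thesis
    unfolding dg_wf_def verts_pair arcs_pair by blast
qed

lemma arcs_cyclic_comp_iff: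
  fixes l :: nat
  assumes "2 \<le> l" "\<forall>i<l. dg_wf (Vs i, As i)" "\<forall>i<l. vs i \<in> Vs i"
    "\<forall>i<l. \<forall>j<l. i \<noteq> j \<longrightarrow> Vs i \<inter> Vs j = {}" and i: "i < l" "v \<in> Vs i"
  defines "G \<equiv> ((\<Union>i<l. Vs i), (\<Union>i<l. As i) \<union> {(vs i, vs ((i + 1) mod l)) | i. i < l})"
  shows "(v, w) \<in> arcs G \<longleftrightarrow> (v, w) \<in> As i \<or> (v = vs i \<and> w = vs ((i + 1) mod l))"
    and "(w, v) \<in> arcs G \<longleftrightarrow> (w, v) \<in> As i \<or> (v = vs i \<and> (\<exists>j<l. (j + 1) mod l = i \<and> w = vs j))"
proof -
  have part: "j = i" if "j < l" "x \<in> Vs j" "x \<in> Vs i" for j x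
    using assms(4) i(1) that by blast
  have As: "As j \<subseteq> Vs j \<times> Vs j" if "j < l" for j
    using assms(2) that by (simp add: dg_wf_def)
  have vs_in: "vs j \<in> Vs j" "(j + 1) mod l < l" if "j < l" for j
    using assms(1,3) that by simp_all
  have arc_cases: "(x, y) \<in> As i \<or> (\<exists>j<l. x = vs j \<and> y = vs ((j + 1) mod l))"
    if "(x, y) \<in> arcs G" "x \<in> Vs i \<or> y \<in> Vs i" for x y
    using that As part by (auto simp: G_def)
  show "(v, w) \<in> arcs G \<longleftrightarrow> (v, w) \<in> As i \<or> (v = vs i \<and> w = vs ((i + 1) mod l))"
  proof
    assume "(v, w) \<in> arcs G"
    then consider "(v, w) \<in> As i" | j where "j < l" "v = vs j" "w = vs ((j + 1) mod l)"
      using arc_cases i(2) by blast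
    then show "(v, w) \<in> As i \<or> (v = vs i \<and> w = vs ((i + 1) mod l))"
    proof cases
      case (2 j)
      then have "j = i"
        using part vs_in i(2) by blast
      with 2 show ?thesis
        by simp
    qed simp
  qed (use i in \<open>auto simp: G_def\<close>)
  show "(w, v) \<in> arcs G \<longleftrightarrow> (w, v) \<in> As i \<or> (v = vs i \<and> (\<exists>j<l. (j + 1) mod l = i \<and> w = vs j))"
  proof
    assume "(w, v) \<in> arcs G"
    then consider "(w, v) \<in> As i" | j where "j < l" "w = vs j" "v = vs ((j + 1) mod l)"
      using arc_cases i(2) by blast
    then show "(w, v) \<in> As i \<or> (v = vs i \<and> (\<exists>j<l. (j + 1) mod l = i \<and> w = vs j))"
    proof cases
      case (2 j)
      then have "(j + 1) mod l = i"
        using part vs_in(1)[of "(j + 1) mod l"] vs_in(2) i(2) by blast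
      with 2 show ?thesis
        by auto
    qed simp
  qed (use i in \<open>auto simp: G_def\<close>)
qed

lemma degrees_cyclic_comp:
  fixes l :: nat
  assumes "2 \<le> l" "\<forall>i<l. dg_wf (Vs i, As i)" "\<forall>i<l. vs i \<in> Vs i"
    "\<forall>i<l. \<forall>j<l. i \<noteq> j \<longrightarrow> Vs i \<inter> Vs j = {}" and i: "i < l" "v \<in> Vs i"
  defines "G \<equiv> ((\<Union>i<l. Vs i), (\<Union>i<l. As i) \<union> {(vs i, vs ((i + 1) mod l)) | i. i < l})"
  shows "outdeg G v = outdeg (Vs i, As i) v + (if v = vs i then 1 else 0)"
    and "indeg G v = indeg (Vs i, As i) v + (if v = vs i then 1 else 0)"
proof -
  obtain p where p: "{j. j < l \<and> Suc j mod l = i} = {p}"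
    using Suc_mod_preimage[OF i(1)] by blast
  then have p_iff: "j < l \<and> (j + 1) mod l = i \<longleftrightarrow> j = p" for j
    by (simp add: set_eq_iff)
  have pred_iff: "(\<exists>j<l. (j + 1) mod l = i \<and> w = vs j) \<longleftrightarrow> w = vs p" for w
  proof
    assume "\<exists>j<l. (j + 1) mod l = i \<and> w = vs j"
    then obtain j where "j < l" "(j + 1) mod l = i" "w = vs j"
      by blast
    then show "w = vs p"
      using p_iff[of j] by simp
  qed (use p_iff[of p] in auto)
  have "p < l" "p \<noteq> i"
    using p_iff[of p] Suc_mod_neq[OF assms(1), of p] by auto
  moreover have "vs j \<notin> Vs i" if "j < l" "j \<noteq> i" for j
    using assms(3,4) i that by blast
  ultimately have "vs ((i + 1) mod l) \<notin> Vs i" "vs p \<notin> Vs i"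
    using assms(1) Suc_mod_neq[OF assms(1) i(1)] by simp_all
  moreover have nbrs: "{w. (v, w) \<in> As i} \<subseteq> Vs i" "{w. (w, v) \<in> As i} \<subseteq> Vs i"
    and "finite (Vs i)"
    using assms(2) i by (auto simp: dg_wf_def)
  ultimately have "(v, vs ((i + 1) mod l)) \<notin> As i" "(vs p, v) \<notin> As i"
    and "finite {w. (v, w) \<in> As i}" "finite {w. (w, v) \<in> As i}"
    by (auto intro: finite_subset)
  moreover have "{w. (v, w) \<in> arcs G} =
      (if v = vs i then insert (vs ((i + 1) mod l)) {w. (v, w) \<in> As i} else {w. (v, w) \<in> As i})"
    using arcs_cyclic_comp_iff(1)[OF assms(1-4) i] by (auto simp: G_def)
  moreover have "{w. (w, v) \<in> arcs G} =
      (if v = vs i then insert (vs p) {w. (w, v) \<in> As i} else {w. (w, v) \<in> As i})"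
    using arcs_cyclic_comp_iff(2)[OF assms(1-4) i] pred_iff by (auto simp: G_def)
  ultimately show "outdeg G v = outdeg (Vs i, As i) v + (if v = vs i then 1 else 0)"
    and "indeg G v = indeg (Vs i, As i) v + (if v = vs i then 1 else 0)"
    unfolding outdeg_def indeg_def by auto
qed

section \<open>Vertices of mindegree k - 1\<close>

definition low_verts :: "nat \<Rightarrow> 'a digraph \<Rightarrow> 'a set" where
  "low_verts k G = {v\<in>verts G. mindeg G v = k - 1}"

definition ktree_exceptional :: "nat \<Rightarrow> 'a digraph \<Rightarrow> bool" where
  "ktree_exceptional k G \<longleftrightarrow>
     dg_iso G (symK k) \<or> (k = 2 \<and> (\<exists>n. odd n \<and> dg_iso G (sympath n)))"

lemma finite_low_verts: "dg_wf G \<Longrightarrow> finite (low_verts k G)"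
  by (simp add: low_verts_def dg_wf_def)

lemma card_low_verts_dg_iso_map:
  assumes "dg_iso_map f G H" "dg_wf G" "dg_wf H"
  shows "card (low_verts k G) = card (low_verts k H)"
proof -
  have "low_verts k G = {v\<in>verts G. mindeg H (f v) = k - 1}"
    using mindeg_dg_iso_map[OF assms] by (auto simp: low_verts_def)
  then show ?thesis
    using card_dg_iso_map_Collect[OF assms(1), of "\<lambda>w. mindeg H w = k - 1"]
    by (simp add: low_verts_def)
qed

lemma low_verts_regular: "dg_regular (k - 1) G \<Longrightarrow> low_verts k G = verts G"
  by (auto simp: low_verts_def dg_regular_def mindeg_def)

lemma sym_arcs_ktree_exceptional:
  assumes "dg_wf G" "ktree_exceptional k G"
  shows "sym (arcs G)"
  using assms(2) unfolding ktree_exceptional_def dg_iso_iff_map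
  by (elim disjE exE conjE)
    (blast intro: sym_arcs_dg_iso_map[OF _ assms(1) sym_arcs_symK]
      sym_arcs_dg_iso_map[OF _ assms(1) sym_arcs_sympath])+

lemma card_low_verts_ktree_exceptional:
  assumes "dg_wf G" "ktree_exceptional k G"
  shows "k \<le> card (low_verts k G)"
  using assms(2) unfolding ktree_exceptional_def
proof
  assume "dg_iso G (symK k)"
  then show ?thesis
    using card_low_verts_dg_iso_map[OF _ assms(1) dg_wf_symK]
    by (auto simp: dg_iso_iff_map low_verts_regular[OF dg_regular_symK] symK_verts)
next
  assume "k = 2 \<and> (\<exists>n. odd n \<and> dg_iso G (sympath n))"
  then obtain n f where k: "k = 2" and "odd n" and f: "dg_iso_map f G (sympath n)"
    by (auto simp: dg_iso_iff_map)
  then have "{0, n} \<subseteq> low_verts k (sympath n)" "n \<noteq> 0"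
    using mindeg_sympath_ends[of n] odd_pos[OF \<open>odd n\<close>] by (auto simp: low_verts_def sympath_verts)
  then have "card {0, n} \<le> card (low_verts k (sympath n))"
    by (intro card_mono finite_low_verts dg_wf_sympath)
  with \<open>n \<noteq> 0\<close> have "2 \<le> card (low_verts k (sympath n))"
    by simp
  then show ?thesis
    using card_low_verts_dg_iso_map[OF f assms(1) dg_wf_sympath] k by simp
qed

lemma in_B_cases:
  assumes "in_B j G"
  obtains (dicycle) n where "j = 1" "2 \<le> n" "dg_iso G (dicycle n)"
    | (symcycle) n where "j = 2" "odd n" "3 \<le> n" "dg_iso G (symcycle n)"
    | (symK) "3 \<le> j" "dg_iso G (symK (j + 1))"
  using assms unfolding in_B_def by blast

lemma dg_regular_in_B:
  assumes "dg_wf G" "in_B j G"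
  shows "dg_regular j G"
  using assms(2)
proof (cases rule: in_B_cases)
  case (dicycle n)
  then show ?thesis
    using dg_regular_dg_iso_map[OF _ assms(1) dg_wf_dicycle dg_regular_dicycle]
    by (auto simp: dg_iso_iff_map)
next
  case (symcycle n)
  then show ?thesis
    using dg_regular_dg_iso_map[OF _ assms(1) dg_wf_symcycle dg_regular_symcycle]
    by (auto simp: dg_iso_iff_map)
next
  case symK
  then show ?thesis
    using dg_regular_dg_iso_map[OF _ assms(1) dg_wf_symK dg_regular_symK[of "j + 1"]]
    by (auto simp: dg_iso_iff_map)
qed

lemma card_verts_in_B:
  assumes "in_B j G"
  shows "j + 2 \<le> card (verts G) \<or> dg_iso G (symK (j + 1))"
  using assms
proof (cases rule: in_B_cases)
  case (dicycle n)
  show ?thesis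
  proof (cases "n = 2")
    case True
    then show ?thesis
      using dicycle dicycle_2 by (simp add: numeral_2_eq_2)
  next
    case False
    obtain f where "dg_iso_map f G (dicycle n)"
      using dicycle by (auto simp: dg_iso_iff_map)
    then show ?thesis
      using dicycle False card_verts_dg_iso_map by (fastforce simp: dicycle_verts)
  qed
next
  case (symcycle n)
  have "n = 3 \<or> 5 \<le> n"
    using symcycle by presburger
  then show ?thesis
  proof
    assume "n = 3"
    then show ?thesis
      using symcycle symcycle_3 by simp
  next
    assume "5 \<le> n"
    obtain f where "dg_iso_map f G (symcycle n)"
      using symcycle by (auto simp: dg_iso_iff_map)
    then show ?thesis
      using symcycle \<open>5 \<le> n\<close> card_verts_dg_iso_map by (fastforce simp: symcycle_verts)
  qed
qed simp

section \<open>k-trees\<close>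

lemma ktree_dg_wf: "ktree k G \<Longrightarrow> dg_wf G"
proof (induction rule: ktree.induct)
  case (direct V1 A1 V2 A2 v1 v2 e)
  then show ?case
    by (intro dg_wf_direct_comp) auto
next
  case (cyclic l Vs As vs G)
  then show ?case
    using dg_wf_cyclic_comp[of l Vs As vs] by simp
qed

lemma ktree_mindeg_ge: "ktree k G \<Longrightarrow> v \<in> verts G \<Longrightarrow> k - 1 \<le> mindeg G v"
proof (induction arbitrary: v rule: ktree.induct)
  case (base G)
  then show ?case
    using dg_regular_in_B[OF base.hyps(1,2)] by (simp add: dg_regular_def mindeg_def)
next
  case (direct V1 A1 V2 A2 v1 v2 e)
  have wf: "dg_wf (V1, A1)" "dg_wf (V2, A2)"
    using direct.hyps(1,2) ktree_dg_wf by blast+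
  have e: "e \<in> V1 \<times> V2 \<union> V2 \<times> V1" "e \<in> V2 \<times> V1 \<union> V1 \<times> V2"
    using direct.hyps(4-6) by auto
  consider "v \<in> V1" | "v \<in> V2"
    using direct.prems by auto
  then show ?case
  proof cases
    case 1
    then have "mindeg (V1, A1) v \<le> mindeg (V1 \<union> V2, A1 \<union> A2 \<union> {e}) v"
      using outdeg_direct_comp[OF wf direct.hyps(3) e(1) 1] indeg_direct_comp[OF wf direct.hyps(3) e(1) 1]
      by (intro mindeg_mono) simp_all
    then show ?thesis
      using direct.IH(1) 1 by fastforce
  next
    case 2
    have "V2 \<inter> V1 = {}"
      using direct.hyps(3) by blast
    then have "mindeg (V2, A2) v \<le> mindeg (V2 \<union> V1, A2 \<union> A1 \<union> {e}) v"
      using outdeg_direct_comp[OF wf(2,1) _ e(2) 2] indeg_direct_comp[OF wf(2,1) _ e(2) 2]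
      by (intro mindeg_mono) simp_all
    then show ?thesis
      unfolding direct_comp_commute[of V1] using direct.IH(2) 2 by fastforce
  qed
next
  case (cyclic l Vs As vs G)
  then obtain i where "i < l" "v \<in> Vs i"
    by auto
  moreover have "\<forall>i<l. dg_wf (Vs i, As i)"
    using cyclic.IH ktree_dg_wf by blast
  ultimately have "mindeg (Vs i, As i) v \<le> mindeg G v"
    using cyclic.hyps degrees_cyclic_comp[of l Vs As vs i v] by (intro mindeg_mono) simp_all
  then show ?case
    using cyclic.IH \<open>i < l\<close> \<open>v \<in> Vs i\<close> by fastforce
qed

lemma card_low_verts_Diff_singleton:
  assumes "dg_wf H" "k + 1 \<le> card (low_verts k H) \<or> ktree_exceptional k H"
  shows "k - 1 \<le> card (low_verts k H - {u})"
    and "\<not> ktree_exceptional k H \<Longrightarrow> k \<le> card (low_verts k H - {u})"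
proof -
  have "card (low_verts k H) - 1 \<le> card (low_verts k H - {u})"
    by (simp add: card_Diff_singleton_if)
  then show "k - 1 \<le> card (low_verts k H - {u})"
    and "\<not> ktree_exceptional k H \<Longrightarrow> k \<le> card (low_verts k H - {u})"
    using assms card_low_verts_ktree_exceptional[OF assms(1)] by fastforce+
qed

lemma low_verts_direct_comp:
  assumes wf: "dg_wf (V1, A1)" "dg_wf (V2, A2)" and "V1 \<inter> V2 = {}" "v1 \<in> V1" "v2 \<in> V2"
    and e: "e = (v1, v2) \<or> e = (v2, v1)"
  defines "G \<equiv> (V1 \<union> V2, A1 \<union> A2 \<union> {e})"
  shows "low_verts k (V1, A1) - {v1} \<subseteq> low_verts k G"
    and "sym A1 \<Longrightarrow> low_verts k (V1, A1) \<subseteq> low_verts k G"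
proof -
  have "e \<in> V1 \<times> V2 \<union> V2 \<times> V1"
    using assms(4,5) e by auto
  note degs = outdeg_direct_comp[OF wf assms(3) this] indeg_direct_comp[OF wf assms(3) this]
  have ends: "fst e = v \<longleftrightarrow> v = v1 \<and> e = (v1, v2)" "snd e = v \<longleftrightarrow> v = v1 \<and> e = (v2, v1)"
    if "v \<in> V1" for v
    using assms(3-5) e that by auto
  show low_other: "low_verts k (V1, A1) - {v1} \<subseteq> low_verts k G"
    using degs ends by (auto simp: low_verts_def mindeg_def G_def)
  assume "sym A1"
  show "low_verts k (V1, A1) \<subseteq> low_verts k G"
  proof
    fix v assume v: "v \<in> low_verts k (V1, A1)"
    show "v \<in> low_verts k G"
    proof (cases "v = v1")
      case True
      have "outdeg (V1, A1) v1 = k - 1" "indeg (V1, A1) v1 = k - 1"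
        using v True outdeg_eq_indeg_if_sym[of "(V1, A1)"] \<open>sym A1\<close>
        by (auto simp: low_verts_def mindeg_def)
      moreover have "fst e = v1 \<longleftrightarrow> snd e \<noteq> v1"
        using e assms(3-5) by auto
      ultimately have "mindeg G v1 = k - 1"
        using degs[OF \<open>v1 \<in> V1\<close>] by (simp add: mindeg_def G_def)
      then show ?thesis
        using True assms(4) by (simp add: low_verts_def G_def)
    qed (use v low_other in blast)
  qed
qed

lemma card_low_verts_direct_comp_part:
  assumes "dg_wf (V1, A1)" "dg_wf (V2, A2)" "V1 \<inter> V2 = {}" "v1 \<in> V1" "v2 \<in> V2"
    "e = (v1, v2) \<or> e = (v2, v1)"
    and count: "k + 1 \<le> card (low_verts k (V1, A1)) \<or> ktree_exceptional k (V1, A1)"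
  defines "G \<equiv> (V1 \<union> V2, A1 \<union> A2 \<union> {e})"
  shows "k \<le> card (low_verts k G \<inter> V1)"
proof -
  have fin: "finite (low_verts k G \<inter> V1)"
    using assms(1) by (simp add: dg_wf_def)
  have sub: "low_verts k (V1, A1) \<subseteq> V1"
    by (auto simp: low_verts_def)
  obtain S where "S \<subseteq> low_verts k G \<inter> V1" "k \<le> card S"
  proof (cases "ktree_exceptional k (V1, A1)")
    case True
    then have "sym A1"
      using sym_arcs_ktree_exceptional[OF assms(1)] by fastforce
    then have "low_verts k (V1, A1) \<subseteq> low_verts k G"
      using low_verts_direct_comp(2)[OF assms(1-6)] unfolding G_def by blast
    then show ?thesis
      using that[of "low_verts k (V1, A1)"] sub card_low_verts_ktree_exceptional[OF assms(1) True]
      by blast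
  next
    case False
    have "low_verts k (V1, A1) - {v1} \<subseteq> low_verts k G"
      using low_verts_direct_comp(1)[OF assms(1-6)] unfolding G_def by blast
    then show ?thesis
      using that[of "low_verts k (V1, A1) - {v1}"] sub
        card_low_verts_Diff_singleton(2)[OF assms(1) count False]
      by blast
  qed
  then show ?thesis
    using card_mono[OF fin] le_trans by blast
qed

lemma card_low_verts_cyclic_comp:
  fixes l :: nat
  assumes "2 \<le> l" "\<forall>i<l. dg_wf (Vs i, As i)" "\<forall>i<l. vs i \<in> Vs i"
    "\<forall>i<l. \<forall>j<l. i \<noteq> j \<longrightarrow> Vs i \<inter> Vs j = {}" "1 \<le> k"
    and mindeg_ge: "\<forall>i<l. \<forall>v\<in>Vs i. k - 1 \<le> mindeg (Vs i, As i) v"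
  defines "G \<equiv> ((\<Union>i<l. Vs i), (\<Union>i<l. As i) \<union> {(vs i, vs ((i + 1) mod l)) | i. i < l})"
  shows "card (low_verts k G) = (\<Sum>i<l. card (low_verts k (Vs i, As i) - {vs i}))"
proof -
  have "v \<in> low_verts k G \<longleftrightarrow> v \<in> low_verts k (Vs i, As i) - {vs i}" if "i < l" "v \<in> Vs i" for i v
  proof -
    have "mindeg G v = mindeg (Vs i, As i) v + (if v = vs i then 1 else 0)"
      using degrees_cyclic_comp[OF assms(1-4) that] by (simp add: mindeg_def G_def)
    moreover have "v \<in> verts G"
      using that by (auto simp: G_def)
    moreover have "k - 1 \<le> mindeg (Vs i, As i) v"
      using mindeg_ge that by blast
    ultimately show ?thesis
      using that assms(5) by (auto simp: low_verts_def)
  qed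
  then have "low_verts k G = (\<Union>i<l. low_verts k (Vs i, As i) - {vs i})"
    by (auto simp: low_verts_def G_def)
  moreover have "finite (low_verts k (Vs i, As i) - {vs i})" if "i < l" for i
    using assms(2) that finite_low_verts by blast
  moreover have "(low_verts k (Vs i, As i) - {vs i}) \<inter> (low_verts k (Vs j, As j) - {vs j}) = {}"
    if "i < l" "j < l" "i \<noteq> j" for i j
    using assms(4) that by (auto simp: low_verts_def)
  ultimately show ?thesis
    by (simp add: card_UN_disjoint)
qed

lemma cyclic_comp_two:
  fixes Vs :: "nat \<Rightarrow> 'a set" and As :: "nat \<Rightarrow> ('a \<times> 'a) set"
  shows "((\<Union>i<2. Vs i), (\<Union>i<2. As i) \<union> {(vs i, vs ((i + 1) mod 2)) | i. i < (2::nat)}) =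
    (Vs 0 \<union> Vs 1, As 0 \<union> As 1 \<union> {(vs 0, vs 1), (vs 1, vs 0)})"
proof -
  have "{..<2::nat} = {0, 1}" "{(vs i, vs ((i + 1) mod 2)) | i. i < (2::nat)} = {(vs 0, vs 1), (vs 1, vs 0)}"
    by (auto simp: less_2_cases_iff)
  then show ?thesis
    by simp
qed

lemma sympath_cyclic_comp_two:
  fixes Vs :: "nat \<Rightarrow> 'a set" and As :: "nat \<Rightarrow> ('a \<times> 'a) set"
  assumes wf: "\<forall>i<2. dg_wf (Vs i, As i)" and "\<forall>i<2. vs i \<in> Vs i"
    and "\<forall>i<2. \<forall>j<2. i \<noteq> j \<longrightarrow> Vs i \<inter> Vs j = {}"
    and paths: "\<forall>i<2. \<exists>n. odd n \<and> dg_iso (Vs i, As i) (sympath n)"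
  defines "G \<equiv> ((\<Union>i<2. Vs i), (\<Union>i<2. As i) \<union> {(vs i, vs ((i + 1) mod 2)) | i. i < (2::nat)})"
  assumes Delta: "Delta_max G \<le> 2"
  shows "\<exists>n. odd n \<and> dg_iso G (sympath n)"
proof -
  have "dg_wf G"
    unfolding G_def using dg_wf_cyclic_comp[OF _ assms(1-3)] by simp
  have endpoint: "vs i \<in> Vs i" "outdeg (Vs i, As i) (vs i) \<le> 1" if "i < 2" for i
  proof -
    show "vs i \<in> Vs i"
      using assms(2) that by blast
    moreover from this have "vs i \<in> verts G"
      using that by (auto simp: G_def)
    ultimately show "outdeg (Vs i, As i) (vs i) \<le> 1"
      using degrees_cyclic_comp(1)[OF _ assms(1-3) that, of "vs i"] Delta
        degrees_le_Delta_max(1)[OF \<open>dg_wf G\<close>, of "vs i"]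
      by (simp add: G_def)
  qed
  obtain n0 f0 n1 f1 where "odd n0" and f0: "dg_iso_map f0 (Vs 0, As 0) (sympath n0)"
    and "odd n1" and f1: "dg_iso_map f1 (Vs 1, As 1) (sympath n1)"
    using paths[rule_format, of 0] paths[rule_format, of 1] by (auto simp: dg_iso_iff_map)
  have wf01: "dg_wf (Vs 0, As 0)" "dg_wf (Vs 1, As 1)"
    using wf by simp_all
  obtain g0 where "dg_iso_map g0 (Vs 0, As 0) (sympath n0)" "g0 (vs 0) = n0"
    by (rule dg_iso_map_sympath_to_end[OF f0 wf01(1)]) (use endpoint[of 0] in simp_all)
  moreover obtain g1 where "dg_iso_map g1 (Vs 1, As 1) (sympath n1)" "g1 (vs 1) = 0"
    by (rule dg_iso_map_sympath_to_start[OF f1 wf01(2)]) (use endpoint[of 1] in simp_all)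
  moreover have "Vs 0 \<inter> Vs 1 = {}"
    using assms(3) by simp
  ultimately have "dg_iso G (sympath (n0 + n1 + 1))"
    unfolding G_def cyclic_comp_two
    using dg_iso_sympath_join wf01 endpoint(1)[of 0] endpoint(1)[of 1] by simp
  then show ?thesis
    using \<open>odd n0\<close> \<open>odd n1\<close> by (intro exI[of _ "n0 + n1 + 1"]) simp
qed

lemma ktree_exceptional_2: "ktree_exceptional 2 G \<longleftrightarrow> (\<exists>n. odd n \<and> dg_iso G (sympath n))"
  unfolding ktree_exceptional_def symK_2 by (metis odd_one)

lemma add_one_le_mult_diff_one:
  fixes k l :: nat
  assumes "2 \<le> l" "2 \<le> k" "3 \<le> k \<or> 3 \<le> l"
  shows "k + 1 \<le> l * (k - 1)"
proof (cases "3 \<le> k")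
  case True
  then have "k + 1 \<le> 2 * (k - 1)"
    by simp
  also have "\<dots> \<le> l * (k - 1)"
    using assms(1) by (intro mult_right_mono) simp_all
  finally show ?thesis .
next
  case False
  then have "k = 2" "3 \<le> l"
    using assms by simp_all
  then show ?thesis
    by simp
qed

lemma card_low_verts_direct_comp:
  assumes "dg_wf (V1, A1)" "dg_wf (V2, A2)" "V1 \<inter> V2 = {}" "v1 \<in> V1" "v2 \<in> V2"
    "e = (v1, v2) \<or> e = (v2, v1)" "1 \<le> k"
    "k + 1 \<le> card (low_verts k (V1, A1)) \<or> ktree_exceptional k (V1, A1)"
    "k + 1 \<le> card (low_verts k (V2, A2)) \<or> ktree_exceptional k (V2, A2)"
  defines "G \<equiv> (V1 \<union> V2, A1 \<union> A2 \<union> {e})"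
  shows "k + 1 \<le> card (low_verts k G)"
proof -
  have "dg_wf G"
    unfolding G_def using dg_wf_direct_comp[OF assms(1-3)] assms(4-6) by auto
  then have fin: "finite (low_verts k G)"
    by (rule finite_low_verts)
  have "k \<le> card (low_verts k G \<inter> V1)"
    using card_low_verts_direct_comp_part[OF assms(1-6,8)] by (simp add: G_def)
  moreover have "k \<le> card (low_verts k G \<inter> V2)"
    using card_low_verts_direct_comp_part[OF assms(2,1) _ assms(5,4) _ assms(9), of e] assms(3,6)
    unfolding G_def direct_comp_commute[of V1] by auto
  moreover have "card (low_verts k G \<inter> V1) + card (low_verts k G \<inter> V2) \<le> card (low_verts k G)"
    using assms(3) fin by (subst card_Un_disjoint[symmetric]) (auto intro: card_mono)
  ultimately show ?thesis
    using assms(7) by simp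
qed

lemma card_low_verts_cyclic_comp_ge:
  fixes l :: nat
  assumes "2 \<le> l" "2 \<le> k" and parts: "\<forall>i<l. ktree k (Vs i, As i)"
    and counts: "\<forall>i<l. k + 1 \<le> card (low_verts k (Vs i, As i)) \<or> ktree_exceptional k (Vs i, As i)"
    and "\<forall>i<l. vs i \<in> Vs i" "\<forall>i<l. \<forall>j<l. i \<noteq> j \<longrightarrow> Vs i \<inter> Vs j = {}"
  defines "G \<equiv> ((\<Union>i<l. Vs i), (\<Union>i<l. As i) \<union> {(vs i, vs ((i + 1) mod l)) | i. i < l})"
  assumes Delta: "Delta_max G \<le> k"
  shows "k + 1 \<le> card (low_verts k G) \<or> ktree_exceptional k G"
proof -
  have wf: "\<forall>i<l. dg_wf (Vs i, As i)"
    using parts ktree_dg_wf by blast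
  have mindeg_ge: "\<forall>i<l. \<forall>v\<in>Vs i. k - 1 \<le> mindeg (Vs i, As i) v"
    using parts ktree_mindeg_ge by fastforce
  define c where "c i = card (low_verts k (Vs i, As i) - {vs i})" for i
  have card_G: "card (low_verts k G) = (\<Sum>i<l. c i)"
    using card_low_verts_cyclic_comp[OF assms(1) wf assms(5,6) _ mindeg_ge] assms(2)
    by (simp add: G_def c_def)
  have c_ge: "k - 1 \<le> c i" "\<not> ktree_exceptional k (Vs i, As i) \<Longrightarrow> k \<le> c i" if "i < l" for i
    using card_low_verts_Diff_singleton[of "(Vs i, As i)" k "vs i"] wf counts that
    unfolding c_def by blast+
  show ?thesis
  proof (cases "3 \<le> k \<or> 3 \<le> l")
    case True
    have "l * (k - 1) \<le> (\<Sum>i<l. c i)"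
      using sum_mono[of "{..<l}" "\<lambda>_. k - 1" c] c_ge by simp
    then show ?thesis
      using add_one_le_mult_diff_one[OF assms(1,2) True] card_G by simp
  next
    case False
    then have k: "k = 2" and l: "l = 2"
      using assms(1,2) by simp_all
    show ?thesis
    proof (cases "ktree_exceptional k (Vs 0, As 0) \<and> ktree_exceptional k (Vs 1, As 1)")
      case True
      then have "\<forall>i<2. \<exists>n. odd n \<and> dg_iso (Vs i, As i) (sympath n)"
        using k by (auto simp: ktree_exceptional_2 less_2_cases_iff)
      then show ?thesis
        using sympath_cyclic_comp_two[of Vs As vs] wf assms(5,6) Delta k l
        by (simp add: ktree_exceptional_2 G_def)
    next
      case False
      then have "k + 1 \<le> c 0 + c 1"
        using c_ge[of 0] c_ge[of 1] k l by auto
      then show ?thesis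
        using card_G l by (simp add: numeral_2_eq_2)
    qed
  qed
qed

lemma ktree_card_low_verts:
  assumes "ktree k G" "2 \<le> k"
  shows "k + 1 \<le> card (low_verts k G) \<or> ktree_exceptional k G"
  using assms(1)
proof (induction rule: ktree.induct)
  case (base G)
  have "k - 1 + 2 = k + 1" "k - 1 + 1 = k"
    using assms(2) by simp_all
  then show ?case
    using card_verts_in_B[OF base.hyps(2)] low_verts_regular[OF dg_regular_in_B[OF base.hyps(1,2)]]
    by (auto simp: ktree_exceptional_def)
next
  case (direct V1 A1 V2 A2 v1 v2 e)
  have "dg_wf (V1, A1)" "dg_wf (V2, A2)"
    using direct.hyps(1,2) by (simp_all add: ktree_dg_wf)
  from card_low_verts_direct_comp[OF this direct.hyps(3-6) _ direct.IH] assms(2)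
  show ?case
    by simp
next
  case (cyclic l Vs As vs G)
  then show ?case
    using card_low_verts_cyclic_comp_ge[of l k Vs As vs] assms(2) by simp
qed

theorem mainTheorem4:
  fixes k :: nat and G :: "'a digraph"
  assumes "k \<ge> 2" and "ktree k G"
  shows "(\<forall>v\<in>verts G. mindeg G v \<ge> k - 1) \<and>
         (card {v\<in>verts G. mindeg G v = k - 1} \<ge> k + 1 \<or>
          dg_iso G (symK k) \<or>
          (k = 2 \<and> (\<exists>n. odd n \<and> dg_iso G (sympath n))))"
  using ktree_mindeg_ge[OF assms(2)] ktree_card_low_verts[OF assms(2,1)]
  by (simp add: low_verts_def ktree_exceptional_def)

end
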